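(* Let $S$ be a set of $n$ species and let $R$ be a set of $m$ rooted triplets on $S$. The algorithm BPMTR (described in the context), using any one of the six $e\_score$ functions, can be implemented to run in $O(mn^3)$ time.
   Context: A phylogenetic tree on $S$ is a rooted, unordered, binary tree whose leaves are distinctly labeled by the members of $S$. A rooted triplet on three species $x,y,z$, written $xy|z$, is the phylogenetic tree on $\{x,y,z\}$ in which $x$ and $y$ are siblings; a tree $T$ is consistent with $xy|z$ if $x,y,z$ are leaves of $T$ and the lowest common ancestor of $x$ and $y$ is a proper descendant of the lowest common ancestor of $x$ and $z$. For two disjoint trees $C_1, C_2$ (viewed also as their leaf sets) in a current collection of trees partitioning $S$, define: $w$ = number of triplets $ij|k\in R$ with $i\in C_1$, $j\in C_2$, $k\notin C_1\cup C_2$; $p$ = number of triplets $ij|k\in R$ with $i\in C_1$, $k\in C_2$, $j\notin C_1\cup C_2$; $t$ = number of triplets $ij|k\in R$ with $i\in C_1$, $j\in C_2$. The function $e\_score(C_1,C_2)$ is one fixed choice among the six alternatives $w$, $w/(w+p)$, $w/t$, $w-p$, $(w-p)/(w+p)$, $(w-p)/t$. Algorithm BPMTR: 1. Initialize a set $\mathcal T$ of $n$ one-node trees, one labeled by each species. 2. While $|\mathcal T|>1$: (a) Find and remove from $\mathcal T$ two trees $T_x,T_y$ with maximum $e\_score(T_x,T_y)$. (b) Let $T_{merge}$ be the tree obtained by adding a new root whose two children are the roots of $T_x$ and $T_y$; set $T_{best}:=T_{merge}$. (c) For every subtree $T_{sub}$ of $T_x$ (the subtree rooted at some node of $T_x$),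 let $T_{swapped}$ be the tree obtained from $T_{merge}$ by exchanging the positions of $T_{sub}$ and $T_y$; if $T_{swapped}$ is consistent with more triplets of $R$ than $T_{best}$, set $T_{best}:=T_{swapped}$. (d) Symmetrically, for every subtree $T_{sub}$ of $T_y$, let $T_{swapped}$ be obtained from $T_{merge}$ by exchanging the positions of $T_{sub}$ and $T_x$; if it is consistent with more triplets of $R$ than $T_{best}$, set $T_{best}:=T_{swapped}$. (e) Add $T_{best}$ to $\mathcal T$. 3. Return the unique tree in $\mathcal T$. Running time is measured in the standard RAM model. *)

theory Defs
  imports "HOL-Library.Time_Functions" "HOL-Library.Sublist" Complex_Main
begin

section \<open>Phylogenetic trees, triplets, consistency\<close>

text \<open>The child order of the
representation is irrelevant for consistency (trees are unordered in the paper).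
A rooted triplet xy|z is represented by the triple (x, y, z).\<close>

datatype 'a ptree = Leaf 'a | Node "'a ptree" "'a ptree"

fun leaves :: "'a ptree \<Rightarrow> 'a set" where
  "leaves (Leaf a) = {a}"
| "leaves (Node l r) = leaves l \<union> leaves r"

text \<open>Nodes are identified with their root-paths (False = left, True = right);
an ancestor is a prefix.  leaf_path gives the node of a leaf.\<close>

fun leaf_path :: "'a ptree \<Rightarrow> 'a \<Rightarrow> bool list option" where
  "leaf_path (Leaf b) a = (if a = b then Some [] else None)"
| "leaf_path (Node l r) a =
     (case leaf_path l a of
        Some p \<Rightarrow> Some (False # p)
      | None \<Rightarrow> (case leaf_path r a of Some p \<Rightarrow> Some (True # p) | None \<Rightarrow> None))"

text \<open>Lowest common ancestor of two nodes = longest common prefix of their paths.\<close>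
fun lcp :: "bool list \<Rightarrow> bool list \<Rightarrow> bool list" where
  "lcp (a # as) (b # bs) = (if a = b then a # lcp as bs else [])"
| "lcp _ _ = []"

definition lca :: "'a ptree \<Rightarrow> 'a \<Rightarrow> 'a \<Rightarrow> bool list" where
  "lca T x y = lcp (the (leaf_path T x)) (the (leaf_path T y))"

definition consistent :: "'a ptree \<Rightarrow> 'a \<times> 'a \<times> 'a \<Rightarrow> bool" where
  "consistent T t = (case t of (x, y, z) \<Rightarrow>
     x \<in> leaves T \<and> y \<in> leaves T \<and> z \<in> leaves T \<and> strict_prefix (lca T x z) (lca T x y))"

definition num_consistent :: "('a \<times> 'a \<times> 'a) set \<Rightarrow> 'a ptree \<Rightarrow> nat" where
  "num_consistent R T = card {t \<in> R. consistent T t}"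

text \<open>A set R of rooted triplets on S (xy|z and yx|z denote the same triplet, so at most
one of the two representations occurs in R; hence m = card R).\<close>
definition triplet_set_on :: "'a set \<Rightarrow> ('a \<times> 'a \<times> 'a) set \<Rightarrow> bool" where
  "triplet_set_on S R \<longleftrightarrow>
     (\<forall>(x, y, z) \<in> R. x \<in> S \<and> y \<in> S \<and> z \<in> S \<and> x \<noteq> y \<and> x \<noteq> z \<and> y \<noteq> z
                      \<and> (y, x, z) \<notin> R)"

fun cons_all :: "bool \<Rightarrow> bool list list \<Rightarrow> bool list list" where
  "cons_all b [] = []"
| "cons_all b (p # ps) = (b # p) # cons_all b ps"

fun positions :: "'a ptree \<Rightarrow> bool list list" where
  "positions (Leaf a) = [[]]"
| "positions (Node l r) = [] # (cons_all False (positions l) @ cons_all True (positions r))"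

fun subtree_at :: "'a ptree \<Rightarrow> bool list \<Rightarrow> 'a ptree" where
  "subtree_at t [] = t"
| "subtree_at (Node l r) (b # p) = (if b then subtree_at r p else subtree_at l p)"
| "subtree_at (Leaf a) (b # p) = Leaf a"

fun replace_at :: "'a ptree \<Rightarrow> bool list \<Rightarrow> 'a ptree \<Rightarrow> 'a ptree" where
  "replace_at t [] s = s"
| "replace_at (Node l r) (b # p) s =
     (if b then Node l (replace_at r p s) else Node (replace_at l p s) r)"
| "replace_at (Leaf a) (b # p) s = Leaf a"

text \<open>T_merge = Node Tx Ty.  Exchanging the subtree of Tx at position p with Ty,
resp. the subtree of Ty at position q with Tx.\<close>
fun swap_x :: "'a ptree \<Rightarrow> 'a ptree \<Rightarrow> bool list \<Rightarrow> 'a ptree" where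
  "swap_x tx ty p = Node (replace_at tx p ty) (subtree_at tx p)"

fun swap_y :: "'a ptree \<Rightarrow> 'a ptree \<Rightarrow> bool list \<Rightarrow> 'a ptree" where
  "swap_y tx ty q = Node (subtree_at ty q) (replace_at ty q tx)"

section \<open>The six e_score functions\<close>

definition cnt_w :: "('a \<times> 'a \<times> 'a) set \<Rightarrow> 'a set \<Rightarrow> 'a set \<Rightarrow> nat" where
  "cnt_w R C1 C2 = card {(i, j, k). (i, j, k) \<in> R \<and>
      ((i \<in> C1 \<and> j \<in> C2) \<or> (j \<in> C1 \<and> i \<in> C2)) \<and> k \<notin> C1 \<union> C2}"

definition cnt_p :: "('a \<times> 'a \<times> 'a) set \<Rightarrow> 'a set \<Rightarrow> 'a set \<Rightarrow> nat" where
  "cnt_p R C1 C2 = card {(i, j, k). (i, j, k) \<in> R \<and>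
      ((i \<in> C1 \<and> j \<notin> C1 \<union> C2) \<or> (j \<in> C1 \<and> i \<notin> C1 \<union> C2)) \<and> k \<in> C2}"

definition cnt_t :: "('a \<times> 'a \<times> 'a) set \<Rightarrow> 'a set \<Rightarrow> 'a set \<Rightarrow> nat" where
  "cnt_t R C1 C2 = card {(i, j, k). (i, j, k) \<in> R \<and>
      ((i \<in> C1 \<and> j \<in> C2) \<or> (j \<in> C1 \<and> i \<in> C2))}"

datatype escore_fun = Score_w | Score_w_wp | Score_w_t | Score_wmp | Score_wmp_wp | Score_wmp_t

text \<open>Division by zero yields 0 (Isabelle convention).\<close>
fun escore_of :: "escore_fun \<Rightarrow> nat \<Rightarrow> nat \<Rightarrow> nat \<Rightarrow> real" where
  "escore_of Score_w w p t = real w"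
| "escore_of Score_w_wp w p t = real w / (real w + real p)"
| "escore_of Score_w_t w p t = real w / real t"
| "escore_of Score_wmp w p t = real w - real p"
| "escore_of Score_wmp_wp w p t = (real w - real p) / (real w + real p)"
| "escore_of Score_wmp_t w p t = (real w - real p) / real t"

definition e_score :: "escore_fun \<Rightarrow> ('a \<times> 'a \<times> 'a) set \<Rightarrow> 'a ptree \<Rightarrow> 'a ptree \<Rightarrow> real" where
  "e_score es R T1 T2 = escore_of es (cnt_w R (leaves T1) (leaves T2))
        (cnt_p R (leaves T1) (leaves T2)) (cnt_t R (leaves T1) (leaves T2))"

section \<open>Algorithm BPMTR (abstract, with all its nondeterministic choices)\<close>

text \<open>Steps (c)/(d): scan candidates in order, replacing T_best on strict improvement.\<close>
fun greedy_scan :: "('a \<times> 'a \<times> 'a) set \<Rightarrow> 'a ptree \<Rightarrow> 'a ptree list \<Rightarrow> 'a ptree" where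
  "greedy_scan R best [] = best"
| "greedy_scan R best (c # cs) =
     greedy_scan R (if num_consistent R c > num_consistent R best then c else best) cs"

definition merge_outcome :: "('a \<times> 'a \<times> 'a) set \<Rightarrow> 'a ptree \<Rightarrow> 'a ptree \<Rightarrow> 'a ptree \<Rightarrow> bool" where
  "merge_outcome R tx ty tb \<longleftrightarrow>
     (\<exists>ps qs. distinct ps \<and> set ps = set (positions tx) \<and> distinct qs \<and> set qs = set (positions ty) \<and>
        tb = greedy_scan R (greedy_scan R (Node tx ty) (map (swap_x tx ty) ps)) (map (swap_y tx ty) qs))"

definition bpmtr_step :: "escore_fun \<Rightarrow> ('a \<times> 'a \<times> 'a) set \<Rightarrow> 'a ptree set \<Rightarrow> 'a ptree set \<Rightarrow> bool" where
  "bpmtr_step es R Ts Ts' \<longleftrightarrow>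
     (\<exists>tx ty tb. tx \<in> Ts \<and> ty \<in> Ts \<and> tx \<noteq> ty \<and>
        (\<forall>a \<in> Ts. \<forall>b \<in> Ts. a \<noteq> b \<longrightarrow> e_score es R a b \<le> e_score es R tx ty) \<and>
        merge_outcome R tx ty tb \<and> Ts' = insert tb (Ts - {tx, ty}))"

definition bpmtr_output :: "escore_fun \<Rightarrow> ('a \<times> 'a \<times> 'a) set \<Rightarrow> 'a set \<Rightarrow> 'a ptree \<Rightarrow> bool" where
  "bpmtr_output es R S T \<longleftrightarrow> (bpmtr_step es R)\<^sup>*\<^sup>* (Leaf ` S) {T}"

section \<open>A concrete implementation with step counting\<close>

text \<open>Running time is modelled by step-counting functions T_f written in the style of
HOL-Library.Time_Functions (the translation of the book "Functional Data Structures and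
Algorithms"): every call of a user-defined function costs 1 plus the cost of the calls it
makes; list append and length use T_append / T_length from HOL-Library.Time_Functions.
Arithmetic and comparisons on natural numbers and reals, the conversion of a count to a real,
and equality tests between species labels, booleans, or against constructors are primitive
constant-time RAM operations (cost 0 beyond the enclosing call).  Equality between trees or
lists is never used.\<close>

fun mem :: "'a \<Rightarrow> 'a list \<Rightarrow> bool" where
  "mem x [] = False"
| "mem x (y # ys) = (x = y \<or> mem x ys)"

fun leaves_list :: "'a ptree \<Rightarrow> 'a list" where
  "leaves_list (Leaf a) = [a]"
| "leaves_list (Node l r) = leaves_list l @ leaves_list r"

fun leaves_lists :: "'a ptree list \<Rightarrow> 'a list list" where
  "leaves_lists [] = []"
| "leaves_lists (t # ts) = leaves_list t # leaves_lists ts"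

fun find_idx :: "'a \<Rightarrow> 'a list list \<Rightarrow> nat \<Rightarrow> nat" where
  "find_idx x [] i = i"
| "find_idx x (l # ls) i = (if mem x l then i else find_idx x ls (i + 1))"

fun index_triples :: "'a list list \<Rightarrow> ('a \<times> 'a \<times> 'a) list \<Rightarrow> (nat \<times> nat \<times> nat) list" where
  "index_triples ls [] = []"
| "index_triples ls ((x, y, z) # rs) =
     (find_idx x ls 0, find_idx y ls 0, find_idx z ls 0) # index_triples ls rs"

fun count_wpt :: "nat \<Rightarrow> nat \<Rightarrow> (nat \<times> nat \<times> nat) list \<Rightarrow> nat \<times> nat \<times> nat" where
  "count_wpt a b [] = (0, 0, 0)"
| "count_wpt a b ((i, j, k) # xs) =
     (case count_wpt a b xs of (w, p, t) \<Rightarrow>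
       (w + (if ((i = a \<and> j = b) \<or> (j = a \<and> i = b)) \<and> k \<noteq> a \<and> k \<noteq> b then 1 else 0),
        p + (if ((i = a \<and> j \<noteq> a \<and> j \<noteq> b) \<or> (j = a \<and> i \<noteq> a \<and> i \<noteq> b)) \<and> k = b then 1 else 0),
        t + (if (i = a \<and> j = b) \<or> (j = a \<and> i = b) then 1 else 0)))"


fun consider_pair :: "escore_fun \<Rightarrow> (nat \<times> nat \<times> nat) list \<Rightarrow> nat \<Rightarrow> nat
    \<Rightarrow> (nat \<times> nat \<times> real) option \<Rightarrow> (nat \<times> nat \<times> real) option" where
  "consider_pair es ixs a b best =
     (if a = b then best else
       (case count_wpt a b ixs of (w, p, t) \<Rightarrow>
         (case best of
            None \<Rightarrow> Some (a, b, escore_of es w p t)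
          | Some (a', b', s') \<Rightarrow>
              (if escore_of es w p t > s' then Some (a, b, escore_of es w p t) else best))))"


fun scan_b :: "escore_fun \<Rightarrow> (nat \<times> nat \<times> nat) list \<Rightarrow> nat \<Rightarrow> nat list
    \<Rightarrow> (nat \<times> nat \<times> real) option \<Rightarrow> (nat \<times> nat \<times> real) option" where
  "scan_b es ixs a [] best = best"
| "scan_b es ixs a (b # bs) best = scan_b es ixs a bs (consider_pair es ixs a b best)"

fun scan_a :: "escore_fun \<Rightarrow> (nat \<times> nat \<times> nat) list \<Rightarrow> nat list \<Rightarrow> nat list
    \<Rightarrow> (nat \<times> nat \<times> real) option \<Rightarrow> (nat \<times> nat \<times> real) option" where
  "scan_a es ixs [] bs best = best"
| "scan_a es ixs (a # as) bs best = scan_a es ixs as bs (scan_b es ixs a bs best)"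

fun down :: "nat \<Rightarrow> nat list" where
  "down 0 = []"
| "down (Suc k) = k # down k"

fun remove_two :: "nat \<Rightarrow> nat \<Rightarrow> nat \<Rightarrow> 'a ptree list \<Rightarrow> 'a ptree list" where
  "remove_two i a b [] = []"
| "remove_two i a b (t # ts) =
     (if i = a \<or> i = b then remove_two (i + 1) a b ts else t # remove_two (i + 1) a b ts)"

fun lcp_len :: "bool list \<Rightarrow> bool list \<Rightarrow> nat" where
  "lcp_len (a # as) (b # bs) = (if a = b then lcp_len as bs + 1 else 0)"
| "lcp_len as bs = 0"


fun consistent_impl :: "'a ptree \<Rightarrow> 'a \<times> 'a \<times> 'a \<Rightarrow> bool" where
  "consistent_impl t (x, y, z) =
     (case leaf_path t x of None \<Rightarrow> False | Some px \<Rightarrow>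
       (case leaf_path t y of None \<Rightarrow> False | Some py \<Rightarrow>
         (case leaf_path t z of None \<Rightarrow> False | Some pz \<Rightarrow> lcp_len px pz < lcp_len px py)))"

fun count_cons :: "'a ptree \<Rightarrow> ('a \<times> 'a \<times> 'a) list \<Rightarrow> nat" where
  "count_cons t [] = 0"
| "count_cons t (r # rs) = (if consistent_impl t r then count_cons t rs + 1 else count_cons t rs)"


fun scan_x :: "('a \<times> 'a \<times> 'a) list \<Rightarrow> 'a ptree \<Rightarrow> 'a ptree \<Rightarrow> bool list list \<Rightarrow> 'a ptree \<Rightarrow> nat
    \<Rightarrow> 'a ptree \<times> nat" where
  "scan_x rs tx ty [] best c = (best, c)"
| "scan_x rs tx ty (p # ps) best c =
     (let cand = swap_x tx ty p; cc = count_cons cand rs in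
      if cc > c then scan_x rs tx ty ps cand cc else scan_x rs tx ty ps best c)"

fun scan_y :: "('a \<times> 'a \<times> 'a) list \<Rightarrow> 'a ptree \<Rightarrow> 'a ptree \<Rightarrow> bool list list \<Rightarrow> 'a ptree \<Rightarrow> nat
    \<Rightarrow> 'a ptree \<times> nat" where
  "scan_y rs tx ty [] best c = (best, c)"
| "scan_y rs tx ty (q # qs) best c =
     (let cand = swap_y tx ty q; cc = count_cons cand rs in
      if cc > c then scan_y rs tx ty qs cand cc else scan_y rs tx ty qs best c)"

fun merge_impl :: "('a \<times> 'a \<times> 'a) list \<Rightarrow> 'a ptree \<Rightarrow> 'a ptree \<Rightarrow> 'a ptree" where
  "merge_impl rs tx ty =
     (case scan_x rs tx ty (positions tx) (Node tx ty) (count_cons (Node tx ty) rs) of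
        (b1, c1) \<Rightarrow> (case scan_y rs tx ty (positions ty) b1 c1 of (b2, c2) \<Rightarrow> b2))"

fun pick :: "'a ptree list \<Rightarrow> 'a ptree" where
  "pick (t # ts) = t"
| "pick [] = Leaf undefined"

text \<open>Main loop; the fuel argument (the number of species) bounds the number of rounds.\<close>
fun bpmtr_loop :: "nat \<Rightarrow> escore_fun \<Rightarrow> ('a \<times> 'a \<times> 'a) list \<Rightarrow> 'a ptree list \<Rightarrow> 'a ptree" where
  "bpmtr_loop 0 es rs ts = pick ts"
| "bpmtr_loop (Suc f) es rs ts =
     (case scan_a es (index_triples (leaves_lists ts) rs) (down (length ts)) (down (length ts)) None of
        None \<Rightarrow> pick ts
      | Some (a, b, s) \<Rightarrow>
          bpmtr_loop f es rs (merge_impl rs (ts ! a) (ts ! b) # remove_two 0 a b ts))"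

fun leaf_trees :: "'a list \<Rightarrow> 'a ptree list" where
  "leaf_trees [] = []"
| "leaf_trees (x # xs) = Leaf x # leaf_trees xs"

fun bpmtr_impl :: "escore_fun \<Rightarrow> ('a \<times> 'a \<times> 'a) list \<Rightarrow> 'a list \<Rightarrow> 'a ptree" where
  "bpmtr_impl es rs ss = bpmtr_loop (length ss) es rs (leaf_trees ss)"


fun T_mem :: "'a \<Rightarrow> 'a list \<Rightarrow> nat" where
  "T_mem x [] = 1"
| "T_mem x (y # ys) = T_mem x ys + 1"

fun T_leaves_list :: "'a ptree \<Rightarrow> nat" where
  "T_leaves_list (Leaf a) = 1"
| "T_leaves_list (Node l r) =
     T_leaves_list l + T_leaves_list r + T_append (leaves_list l) (leaves_list r) + 1"

fun T_leaves_lists :: "'a ptree list \<Rightarrow> nat" where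
  "T_leaves_lists [] = 1"
| "T_leaves_lists (t # ts) = T_leaves_list t + T_leaves_lists ts + 1"

fun T_find_idx :: "'a \<Rightarrow> 'a list list \<Rightarrow> nat \<Rightarrow> nat" where
  "T_find_idx x [] i = 1"
| "T_find_idx x (l # ls) i = T_mem x l + (if mem x l then 0 else T_find_idx x ls (i + 1)) + 1"

fun T_index_triples :: "'a list list \<Rightarrow> ('a \<times> 'a \<times> 'a) list \<Rightarrow> nat" where
  "T_index_triples ls [] = 1"
| "T_index_triples ls ((x, y, z) # rs) =
     T_find_idx x ls 0 + T_find_idx y ls 0 + T_find_idx z ls 0 + T_index_triples ls rs + 1"

fun T_count_wpt :: "nat \<Rightarrow> nat \<Rightarrow> (nat \<times> nat \<times> nat) list \<Rightarrow> nat" where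
  "T_count_wpt a b [] = 1"
| "T_count_wpt a b (x # xs) = T_count_wpt a b xs + 1"

fun T_escore_of :: "escore_fun \<Rightarrow> nat \<Rightarrow> nat \<Rightarrow> nat \<Rightarrow> nat" where
  "T_escore_of es w p t = 1"

fun T_consider_pair :: "escore_fun \<Rightarrow> (nat \<times> nat \<times> nat) list \<Rightarrow> nat \<Rightarrow> nat
    \<Rightarrow> (nat \<times> nat \<times> real) option \<Rightarrow> nat" where
  "T_consider_pair es ixs a b best =
     (if a = b then 0 else
       (case count_wpt a b ixs of (w, p, t) \<Rightarrow>
          T_count_wpt a b ixs + 2 * T_escore_of es w p t)) + 1"

fun T_scan_b :: "escore_fun \<Rightarrow> (nat \<times> nat \<times> nat) list \<Rightarrow> nat \<Rightarrow> nat list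
    \<Rightarrow> (nat \<times> nat \<times> real) option \<Rightarrow> nat" where
  "T_scan_b es ixs a [] best = 1"
| "T_scan_b es ixs a (b # bs) best =
     T_consider_pair es ixs a b best + T_scan_b es ixs a bs (consider_pair es ixs a b best) + 1"

fun T_scan_a :: "escore_fun \<Rightarrow> (nat \<times> nat \<times> nat) list \<Rightarrow> nat list \<Rightarrow> nat list
    \<Rightarrow> (nat \<times> nat \<times> real) option \<Rightarrow> nat" where
  "T_scan_a es ixs [] bs best = 1"
| "T_scan_a es ixs (a # as) bs best =
     T_scan_b es ixs a bs best + T_scan_a es ixs as bs (scan_b es ixs a bs best) + 1"

fun T_down :: "nat \<Rightarrow> nat" where
  "T_down 0 = 1"
| "T_down (Suc k) = T_down k + 1"

fun T_remove_two :: "nat \<Rightarrow> nat \<Rightarrow> nat \<Rightarrow> 'a ptree list \<Rightarrow> nat" where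
  "T_remove_two i a b [] = 1"
| "T_remove_two i a b (t # ts) = T_remove_two (i + 1) a b ts + 1"

fun T_lcp_len :: "bool list \<Rightarrow> bool list \<Rightarrow> nat" where
  "T_lcp_len (a # as) (b # bs) = (if a = b then T_lcp_len as bs else 0) + 1"
| "T_lcp_len as bs = 1"

fun T_leaf_path :: "'a ptree \<Rightarrow> 'a \<Rightarrow> nat" where
  "T_leaf_path (Leaf b) a = 1"
| "T_leaf_path (Node l r) a =
     T_leaf_path l a + (case leaf_path l a of None \<Rightarrow> T_leaf_path r a | Some p \<Rightarrow> 0) + 1"

fun T_consistent_impl :: "'a ptree \<Rightarrow> 'a \<times> 'a \<times> 'a \<Rightarrow> nat" where
  "T_consistent_impl t (x, y, z) =
     T_leaf_path t x +
     (case leaf_path t x of None \<Rightarrow> 0 | Some px \<Rightarrow>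
        T_leaf_path t y +
        (case leaf_path t y of None \<Rightarrow> 0 | Some py \<Rightarrow>
           T_leaf_path t z +
           (case leaf_path t z of None \<Rightarrow> 0 | Some pz \<Rightarrow> T_lcp_len px pz + T_lcp_len px py))) + 1"

fun T_count_cons :: "'a ptree \<Rightarrow> ('a \<times> 'a \<times> 'a) list \<Rightarrow> nat" where
  "T_count_cons t [] = 1"
| "T_count_cons t (r # rs) = T_consistent_impl t r + T_count_cons t rs + 1"

fun T_cons_all :: "bool \<Rightarrow> bool list list \<Rightarrow> nat" where
  "T_cons_all b [] = 1"
| "T_cons_all b (p # ps) = T_cons_all b ps + 1"

fun T_positions :: "'a ptree \<Rightarrow> nat" where
  "T_positions (Leaf a) = 1"
| "T_positions (Node l r) =
     T_positions l + T_cons_all False (positions l) + T_positions r + T_cons_all True (positions r)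
     + T_append (cons_all False (positions l)) (cons_all True (positions r)) + 1"

fun T_subtree_at :: "'a ptree \<Rightarrow> bool list \<Rightarrow> nat" where
  "T_subtree_at t [] = 1"
| "T_subtree_at (Node l r) (b # p) = (if b then T_subtree_at r p else T_subtree_at l p) + 1"
| "T_subtree_at (Leaf a) (b # p) = 1"

fun T_replace_at :: "'a ptree \<Rightarrow> bool list \<Rightarrow> 'a ptree \<Rightarrow> nat" where
  "T_replace_at t [] s = 1"
| "T_replace_at (Node l r) (b # p) s = (if b then T_replace_at r p s else T_replace_at l p s) + 1"
| "T_replace_at (Leaf a) (b # p) s = 1"

fun T_swap_x :: "'a ptree \<Rightarrow> 'a ptree \<Rightarrow> bool list \<Rightarrow> nat" where
  "T_swap_x tx ty p = T_replace_at tx p ty + T_subtree_at tx p + 1"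

fun T_swap_y :: "'a ptree \<Rightarrow> 'a ptree \<Rightarrow> bool list \<Rightarrow> nat" where
  "T_swap_y tx ty q = T_subtree_at ty q + T_replace_at ty q tx + 1"

fun T_scan_x :: "('a \<times> 'a \<times> 'a) list \<Rightarrow> 'a ptree \<Rightarrow> 'a ptree \<Rightarrow> bool list list \<Rightarrow> 'a ptree \<Rightarrow> nat
    \<Rightarrow> nat" where
  "T_scan_x rs tx ty [] best c = 1"
| "T_scan_x rs tx ty (p # ps) best c =
     T_swap_x tx ty p + T_count_cons (swap_x tx ty p) rs +
     (if count_cons (swap_x tx ty p) rs > c
      then T_scan_x rs tx ty ps (swap_x tx ty p) (count_cons (swap_x tx ty p) rs)
      else T_scan_x rs tx ty ps best c) + 1"

fun T_scan_y :: "('a \<times> 'a \<times> 'a) list \<Rightarrow> 'a ptree \<Rightarrow> 'a ptree \<Rightarrow> bool list list \<Rightarrow> 'a ptree \<Rightarrow> nat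
    \<Rightarrow> nat" where
  "T_scan_y rs tx ty [] best c = 1"
| "T_scan_y rs tx ty (q # qs) best c =
     T_swap_y tx ty q + T_count_cons (swap_y tx ty q) rs +
     (if count_cons (swap_y tx ty q) rs > c
      then T_scan_y rs tx ty qs (swap_y tx ty q) (count_cons (swap_y tx ty q) rs)
      else T_scan_y rs tx ty qs best c) + 1"

fun T_merge_impl :: "('a \<times> 'a \<times> 'a) list \<Rightarrow> 'a ptree \<Rightarrow> 'a ptree \<Rightarrow> nat" where
  "T_merge_impl rs tx ty =
     T_positions tx + T_count_cons (Node tx ty) rs +
     T_scan_x rs tx ty (positions tx) (Node tx ty) (count_cons (Node tx ty) rs) +
     (case scan_x rs tx ty (positions tx) (Node tx ty) (count_cons (Node tx ty) rs) of
        (b1, c1) \<Rightarrow> T_positions ty + T_scan_y rs tx ty (positions ty) b1 c1) + 1"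

fun T_pick :: "'a ptree list \<Rightarrow> nat" where
  "T_pick ts = 1"

fun T_bpmtr_loop :: "nat \<Rightarrow> escore_fun \<Rightarrow> ('a \<times> 'a \<times> 'a) list \<Rightarrow> 'a ptree list \<Rightarrow> nat" where
  "T_bpmtr_loop 0 es rs ts = T_pick ts + 1"
| "T_bpmtr_loop (Suc f) es rs ts =
     T_leaves_lists ts + T_index_triples (leaves_lists ts) rs +
     2 * (T_length ts + T_down (length ts)) +
     T_scan_a es (index_triples (leaves_lists ts) rs) (down (length ts)) (down (length ts)) None +
     (case scan_a es (index_triples (leaves_lists ts) rs) (down (length ts)) (down (length ts)) None of
        None \<Rightarrow> T_pick ts
      | Some (a, b, s) \<Rightarrow>
          T_nth ts a + T_nth ts b + T_merge_impl rs (ts ! a) (ts ! b) + T_remove_two 0 a b ts +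
          T_bpmtr_loop f es rs (merge_impl rs (ts ! a) (ts ! b) # remove_two 0 a b ts)) + 1"

fun T_leaf_trees :: "'a list \<Rightarrow> nat" where
  "T_leaf_trees [] = 1"
| "T_leaf_trees (x # xs) = T_leaf_trees xs + 1"

fun T_bpmtr_impl :: "escore_fun \<Rightarrow> ('a \<times> 'a \<times> 'a) list \<Rightarrow> 'a list \<Rightarrow> nat" where
  "T_bpmtr_impl es rs ss = T_length ss + T_leaf_trees ss + T_bpmtr_loop (length ss) es rs (leaf_trees ss) + 1"

end

theory Submission
  imports Defs "HOL-Library.Multiset"
begin

text \<open>Throughout the run the current trees partition S: a merge, with or without a subtree swap,
only rearranges the leaves of the two trees involved.  Under this invariant each species is mapped to
the index of its tree, and counting w, p, t on the translated triplets reproduces e_score, so the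
exhaustive scan over index pairs selects a pair of maximum score.  For the running time, a round
with k trees costs O(m n) to translate the triplets, O(k^2 m) for the pair scan, and O(m n^2) for the
swaps, since each of the O(n) candidate trees has O(n) nodes and is checked against all m triplets
in O(n) each.  With k \<le> n and at most n rounds this gives O(m n^3).\<close>

section \<open>Consistency and the merge step\<close>

lemma leaves_eq_set_leaves_list: "leaves t = set (leaves_list t)"
  by (induction t) auto

lemma leaves_list_nonempty: "leaves_list t \<noteq> []"
  by (induction t) auto

lemma leaf_path_eq_None_iff: "leaf_path t x = None \<longleftrightarrow> x \<notin> leaves t"
  by (induction t) (auto split: option.splits)

lemma cons_all_eq_map: "cons_all b ps = map ((#) b) ps"
  by (induction ps) auto

lemma distinct_positions: "distinct (positions t)"
  by (induction t) (auto simp: cons_all_eq_map distinct_map)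

lemma lcp_len_eq_length_lcp: "lcp_len xs ys = length (lcp xs ys)"
  by (induction xs ys rule: lcp.induct) auto

lemma prefix_lcp: "prefix (lcp xs ys) xs"
  by (induction xs ys rule: lcp.induct) auto

lemma strict_prefix_iff_length_less:
  assumes "prefix u w" "prefix v w"
  shows "strict_prefix u v \<longleftrightarrow> length u < length v"
proof
  assume "strict_prefix u v"
  then show "length u < length v" by (rule prefix_length_less)
next
  assume less: "length u < length v"
  then have "prefix u v" using prefix_length_prefix[OF assms] by simp
  with less show "strict_prefix u v" by (auto simp: strict_prefix_def)
qed

lemma consistent_impl_iff_consistent: "consistent_impl t r \<longleftrightarrow> consistent t r"
proof -
  obtain x y z where r: "r = (x, y, z)" by (cases r)
  show ?thesis
  proof (cases "x \<in> leaves t \<and> y \<in> leaves t \<and> z \<in> leaves t")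
    case True
    then obtain px py pz where "leaf_path t x = Some px" "leaf_path t y = Some py" "leaf_path t z = Some pz"
      by (metis leaf_path_eq_None_iff not_None_eq)
    with True show ?thesis
      by (simp add: r consistent_def lca_def lcp_len_eq_length_lcp
          strict_prefix_iff_length_less[OF prefix_lcp prefix_lcp])
  next
    case False
    then show ?thesis
      by (auto simp: r consistent_def leaf_path_eq_None_iff[symmetric] split: option.splits)
  qed
qed

lemma count_cons_eq_num_consistent:
  assumes "distinct rs"
  shows "count_cons t rs = num_consistent (set rs) t"
proof -
  have "count_cons t rs = length (filter (consistent t) rs)"
    by (induction rs) (auto simp: consistent_impl_iff_consistent)
  also have "\<dots> = num_consistent (set rs) t"
    using assms by (simp add: distinct_length_filter num_consistent_def Int_def conj_commute)
  finally show ?thesis .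
qed

lemma scan_x_eq_greedy_scan:
  assumes "distinct rs" "c = num_consistent (set rs) best"
  shows "scan_x rs tx ty ps best c = (greedy_scan (set rs) best (map (swap_x tx ty) ps),
     num_consistent (set rs) (greedy_scan (set rs) best (map (swap_x tx ty) ps)))"
  using assms(2)
  by (induction ps arbitrary: best c)
    (simp_all only: scan_x.simps Let_def count_cons_eq_num_consistent[OF assms(1)] list.map
      greedy_scan.simps if_distrib, auto)

lemma scan_y_eq_greedy_scan:
  assumes "distinct rs" "c = num_consistent (set rs) best"
  shows "scan_y rs tx ty qs best c = (greedy_scan (set rs) best (map (swap_y tx ty) qs),
     num_consistent (set rs) (greedy_scan (set rs) best (map (swap_y tx ty) qs)))"
  using assms(2)
  by (induction qs arbitrary: best c)
    (simp_all only: scan_y.simps Let_def count_cons_eq_num_consistent[OF assms(1)] list.map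
      greedy_scan.simps if_distrib, auto)

lemma merge_impl_eq_greedy_scan:
  "distinct rs \<Longrightarrow> merge_impl rs tx ty = greedy_scan (set rs)
     (greedy_scan (set rs) (Node tx ty) (map (swap_x tx ty) (positions tx)))
     (map (swap_y tx ty) (positions ty))"
  by (simp add: scan_x_eq_greedy_scan scan_y_eq_greedy_scan count_cons_eq_num_consistent)

lemma merge_outcome_merge_impl: "distinct rs \<Longrightarrow> merge_outcome (set rs) tx ty (merge_impl rs tx ty)"
  unfolding merge_outcome_def merge_impl_eq_greedy_scan
  using distinct_positions by blast

lemma greedy_scan_mem: "greedy_scan R best cs \<in> insert best (set cs)"
proof (induction cs arbitrary: best)
  case (Cons c cs)
  then show ?case by (cases "num_consistent R c > num_consistent R best") fastforce+
qed simp

lemma mset_leaves_list_replace_at: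
  "p \<in> set (positions t) \<Longrightarrow>
     mset (leaves_list (replace_at t p s)) + mset (leaves_list (subtree_at t p))
       = mset (leaves_list t) + mset (leaves_list s)"
  by (induction t arbitrary: p) (auto simp: cons_all_eq_map algebra_simps)

lemma mset_leaves_list_merge_impl:
  assumes "distinct rs"
  shows "mset (leaves_list (merge_impl rs tx ty)) = mset (leaves_list tx) + mset (leaves_list ty)"
proof -
  let ?g = "greedy_scan (set rs) (Node tx ty) (map (swap_x tx ty) (positions tx))"
  have "mset (leaves_list ?g) = mset (leaves_list tx) + mset (leaves_list ty)"
    using greedy_scan_mem[of "set rs" "Node tx ty" "map (swap_x tx ty) (positions tx)"]
      mset_leaves_list_replace_at[of _ tx ty] by (auto simp: algebra_simps)
  moreover have "merge_impl rs tx ty \<in> insert ?g (set (map (swap_y tx ty) (positions ty)))"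
    unfolding merge_impl_eq_greedy_scan[OF assms] by (rule greedy_scan_mem)
  ultimately show ?thesis
    using mset_leaves_list_replace_at[of _ ty tx] by (auto simp: algebra_simps)
qed

section \<open>Selecting a pair of maximum score\<close>

definition pair_score :: "escore_fun \<Rightarrow> (nat \<times> nat \<times> nat) list \<Rightarrow> nat \<Rightarrow> nat \<Rightarrow> real" where
  "pair_score es ixs a b = (case count_wpt a b ixs of (w, p, t) \<Rightarrow> escore_of es w p t)"

text \<open>Invariant of the pair scan: the current candidate is a genuine pair carrying its own score,
and it dominates every pair scanned so far.\<close>

definition valid_choice :: "escore_fun \<Rightarrow> (nat \<times> nat \<times> nat) list \<Rightarrow> nat
    \<Rightarrow> (nat \<times> nat \<times> real) option \<Rightarrow> bool" where
  "valid_choice es ixs k best \<longleftrightarrow>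
     (\<forall>a b s. best = Some (a, b, s) \<longrightarrow> a \<noteq> b \<and> a < k \<and> b < k \<and> s = pair_score es ixs a b)"

definition score_ge :: "(nat \<times> nat \<times> real) option \<Rightarrow> (nat \<times> nat \<times> real) option \<Rightarrow> bool" where
  "score_ge r t \<longleftrightarrow> (\<forall>a b s. t = Some (a, b, s) \<longrightarrow> (\<exists>a' b' s'. r = Some (a', b', s') \<and> s \<le> s'))"

lemma score_ge_refl: "score_ge r r"
  by (auto simp: score_ge_def)

lemma score_ge_trans: "score_ge r t \<Longrightarrow> score_ge t u \<Longrightarrow> score_ge r u"
  unfolding score_ge_def by (metis order_trans)

lemma scan_a_eq_fold:
  "scan_a es ixs as bs best = fold (\<lambda>(a, b). consider_pair es ixs a b) (List.product as bs) best"
proof -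
  have scan_b: "scan_b es ixs a bs best = fold (consider_pair es ixs a) bs best" for a best
    by (induction bs arbitrary: best) simp_all
  show ?thesis
    by (induction as arbitrary: best) (simp_all add: scan_b fold_map comp_def)
qed

lemma consider_pair_choice:
  assumes "valid_choice es ixs k best" "a < k" "b < k"
  shows "valid_choice es ixs k (consider_pair es ixs a b best)
    \<and> score_ge (consider_pair es ixs a b best) best
    \<and> (a \<noteq> b \<longrightarrow> score_ge (consider_pair es ixs a b best) (Some (a, b, pair_score es ixs a b)))"
proof (cases "a = b")
  case False
  obtain w p t where wpt: "count_wpt a b ixs = (w, p, t)" by (cases "count_wpt a b ixs")
  have score: "pair_score es ixs a b = escore_of es w p t" by (simp add: pair_score_def wpt)
  show ?thesis
  proof (cases best)
    case (Some c)
    obtain a' b' s' where c: "c = (a', b', s')" by (cases c)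
    have cp: "consider_pair es ixs a b best
        = (if s' < pair_score es ixs a b then Some (a, b, pair_score es ixs a b) else best)"
      using False by (simp add: wpt score Some c)
    have "a' \<noteq> b' \<and> a' < k \<and> b' < k \<and> s' = pair_score es ixs a' b'"
      using assms(1) by (simp add: valid_choice_def Some c)
    with assms False show ?thesis
      unfolding cp by (cases "s' < pair_score es ixs a b")
        (simp_all add: valid_choice_def score_ge_def Some c)
  qed (use assms False in \<open>simp add: wpt score valid_choice_def score_ge_def\<close>)
qed (use assms in \<open>simp add: score_ge_refl\<close>)

lemma fold_consider_pair_choice:
  assumes "valid_choice es ixs k best" "set ps \<subseteq> {..<k} \<times> {..<k}"
  shows "valid_choice es ixs k (fold (\<lambda>(a, b). consider_pair es ixs a b) ps best)
    \<and> score_ge (fold (\<lambda>(a, b). consider_pair es ixs a b) ps best) best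
    \<and> (\<forall>(a, b) \<in> set ps. a \<noteq> b \<longrightarrow>
          score_ge (fold (\<lambda>(a, b). consider_pair es ixs a b) ps best) (Some (a, b, pair_score es ixs a b)))"
  using assms
proof (induction ps arbitrary: best)
  case Nil
  then show ?case by (simp add: score_ge_refl)
next
  case (Cons p ps)
  obtain a b where p: "p = (a, b)" by (cases p)
  let ?c = "consider_pair es ixs a b best"
  let ?F = "fold (\<lambda>(a, b). consider_pair es ixs a b) ps ?c"
  have c: "valid_choice es ixs k ?c" "score_ge ?c best"
    "a \<noteq> b \<longrightarrow> score_ge ?c (Some (a, b, pair_score es ixs a b))"
    using consider_pair_choice[OF Cons.prems(1)] Cons.prems(2) p by (auto simp del: consider_pair.simps)
  have IH: "valid_choice es ixs k ?F" "score_ge ?F ?c"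
    "\<forall>(a, b) \<in> set ps. a \<noteq> b \<longrightarrow> score_ge ?F (Some (a, b, pair_score es ixs a b))"
    using Cons.IH[OF c(1)] Cons.prems(2) by (auto simp del: consider_pair.simps)
  have "score_ge ?F best" "a \<noteq> b \<longrightarrow> score_ge ?F (Some (a, b, pair_score es ixs a b))"
    using IH(2) c(2,3) score_ge_trans by blast+
  with IH(1,3) show ?case by (simp add: p del: consider_pair.simps)
qed

lemma set_down: "set (down k) = {..<k}"
  by (induction k) (simp_all add: lessThan_Suc)

lemma length_down: "length (down k) = k"
  by (induction k) simp_all

lemma scan_a_down_choice:
  fixes es ixs k
  defines "F \<equiv> scan_a es ixs (down k) (down k) None"
  shows "valid_choice es ixs k F
    \<and> (\<forall>a < k. \<forall>b < k. a \<noteq> b \<longrightarrow> score_ge F (Some (a, b, pair_score es ixs a b)))"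
  using fold_consider_pair_choice[of es ixs k None "List.product (down k) (down k)"]
  unfolding F_def scan_a_eq_fold by (auto simp: valid_choice_def set_down)

lemma scan_a_down_None:
  assumes "scan_a es ixs (down k) (down k) None = None"
  shows "k \<le> 1"
proof (rule ccontr)
  assume "\<not> k \<le> 1"
  then have "score_ge None (Some (0, 1, pair_score es ixs 0 1))"
    using scan_a_down_choice[of es ixs k] unfolding assms by simp
  then show False unfolding score_ge_def by blast
qed

lemma scan_a_down_Some:
  assumes "scan_a es ixs (down k) (down k) None = Some (a, b, s)"
  shows "a \<noteq> b \<and> a < k \<and> b < k
    \<and> (\<forall>a' < k. \<forall>b' < k. a' \<noteq> b' \<longrightarrow> pair_score es ixs a' b' \<le> pair_score es ixs a b)"
  using scan_a_down_choice[of es ixs k] unfolding assms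
  by (auto simp: valid_choice_def score_ge_def)

section \<open>Forests partitioning the species\<close>

definition forest_on :: "'a set \<Rightarrow> 'a ptree list \<Rightarrow> bool" where
  "forest_on S ts \<longleftrightarrow> distinct (concat (map leaves_list ts)) \<and> set (concat (map leaves_list ts)) = S"

lemma leaves_lists_eq_map: "leaves_lists ts = map leaves_list ts"
  by (induction ts) simp_all

lemma distinct_if_distinct_concat_map:
  "distinct (concat (map f xs)) \<Longrightarrow> (\<And>x. f x \<noteq> []) \<Longrightarrow> distinct xs"
proof (induction xs)
  case (Cons x xs)
  have "x \<notin> set xs"
  proof
    assume "x \<in> set xs"
    then have "set (f x) \<subseteq> set (concat (map f xs))" by auto
    moreover obtain y ys where "f x = y # ys" using Cons.prems(2) by (meson neq_Nil_conv)
    ultimately show False using Cons.prems(1) by auto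
  qed
  with Cons show ?case by simp
qed simp

lemma forest_on_distinct: "forest_on S ts \<Longrightarrow> distinct ts"
  unfolding forest_on_def using distinct_if_distinct_concat_map leaves_list_nonempty by blast

lemma mem_iff: "mem x xs \<longleftrightarrow> x \<in> set xs"
  by (induction xs) simp_all

lemma find_idx_eq:
  "distinct (concat ls) \<Longrightarrow> i < length ls \<Longrightarrow> x \<in> set (ls ! i) \<Longrightarrow> find_idx x ls j = j + i"
proof (induction ls arbitrary: i j)
  case (Cons l ls)
  show ?case
  proof (cases i)
    case 0
    with Cons.prems show ?thesis by (simp add: mem_iff)
  next
    case (Suc i')
    with Cons.prems have "x \<in> set (concat ls)" "i' < length ls" "x \<in> set (ls ! i')"
      by auto
    with Cons.prems Cons.IH[of i' "j + 1"] show ?thesis by (auto simp: Suc mem_iff)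
  qed
qed simp

lemma find_idx_leaves_lists_eq_iff:
  assumes "forest_on S ts" "x \<in> S" "a < length ts"
  shows "find_idx x (leaves_lists ts) 0 = a \<longleftrightarrow> x \<in> leaves (ts ! a)"
proof -
  have d: "distinct (concat (map leaves_list ts))" using assms(1) by (simp add: forest_on_def)
  obtain t where "t \<in> set ts" "x \<in> leaves t"
    using assms(1,2) by (auto simp: forest_on_def leaves_eq_set_leaves_list)
  then obtain i where i: "i < length ts" "x \<in> leaves (ts ! i)" by (metis in_set_conv_nth)
  have "find_idx x (leaves_lists ts) 0 = i" if "i < length ts" "x \<in> leaves (ts ! i)" for i
    using find_idx_eq[OF d, of i x 0] that by (simp add: leaves_lists_eq_map leaves_eq_set_leaves_list)
  with i assms(3) show ?thesis by metis
qed

lemma count_wpt_eq_lengths: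
  "count_wpt a b xs =
    (length (filter (\<lambda>(i, j, k). ((i = a \<and> j = b) \<or> (j = a \<and> i = b)) \<and> k \<noteq> a \<and> k \<noteq> b) xs),
     length (filter (\<lambda>(i, j, k). ((i = a \<and> j \<noteq> a \<and> j \<noteq> b) \<or> (j = a \<and> i \<noteq> a \<and> i \<noteq> b)) \<and> k = b) xs),
     length (filter (\<lambda>(i, j, k). (i = a \<and> j = b) \<or> (j = a \<and> i = b)) xs))"
  by (induction xs) (auto split: prod.splits)

lemma count_wpt_map_index:
  assumes "distinct rs"
    and index: "\<And>x y z v. (x, y, z) \<in> set rs \<Longrightarrow> v \<in> {x, y, z} \<Longrightarrow>
        (f v = a \<longleftrightarrow> v \<in> C1) \<and> (f v = b \<longleftrightarrow> v \<in> C2)"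
  shows "count_wpt a b (map (\<lambda>(x, y, z). (f x, f y, f z)) rs)
    = (cnt_w (set rs) C1 C2, cnt_p (set rs) C1 C2, cnt_t (set rs) C1 C2)"
proof -
  have card: "card {(i, j, k). (i, j, k) \<in> set rs \<and> P i j k} = length (filter (\<lambda>(i, j, k). P i j k) rs)"
    for P
    using assms(1) by (simp add: distinct_length_filter Int_def conj_commute case_prod_unfold)
  show ?thesis
    unfolding count_wpt_eq_lengths cnt_w_def cnt_p_def cnt_t_def card filter_map
    by (intro prod_eqI; simp; intro arg_cong[where f = length] filter_cong refl;
        clarsimp; use index in \<open>simp only: insert_iff simp_thms\<close>)
qed

lemma index_triples_eq_map:
  "index_triples ls rs = map (\<lambda>(x, y, z). (find_idx x ls 0, find_idx y ls 0, find_idx z ls 0)) rs"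
  by (induction ls rs rule: index_triples.induct) simp_all

lemma triplet_set_onD: "triplet_set_on S R \<Longrightarrow> (x, y, z) \<in> R \<Longrightarrow> x \<in> S \<and> y \<in> S \<and> z \<in> S"
  unfolding triplet_set_on_def by blast

lemma pair_score_eq_e_score:
  assumes "forest_on S ts" "triplet_set_on S (set rs)" "distinct rs" "a < length ts" "b < length ts"
  shows "pair_score es (index_triples (leaves_lists ts) rs) a b = e_score es (set rs) (ts ! a) (ts ! b)"
proof -
  have "count_wpt a b (index_triples (leaves_lists ts) rs)
    = (cnt_w (set rs) (leaves (ts ! a)) (leaves (ts ! b)), cnt_p (set rs) (leaves (ts ! a)) (leaves (ts ! b)),
       cnt_t (set rs) (leaves (ts ! a)) (leaves (ts ! b)))"
    unfolding index_triples_eq_map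
  proof (rule count_wpt_map_index[OF assms(3)])
    fix x y z v assume "(x, y, z) \<in> set rs" "v \<in> {x, y, z}"
    then have "v \<in> S" using triplet_set_onD[OF assms(2)] by blast
    then show "(find_idx v (leaves_lists ts) 0 = a \<longleftrightarrow> v \<in> leaves (ts ! a))
        \<and> (find_idx v (leaves_lists ts) 0 = b \<longleftrightarrow> v \<in> leaves (ts ! b))"
      using find_idx_leaves_lists_eq_iff[OF assms(1)] assms(4,5) by simp
  qed
  then show ?thesis by (simp add: pair_score_def e_score_def)
qed

lemma remove_two_eq_nths: "remove_two i a b ts = nths ts {j. i + j \<noteq> a \<and> i + j \<noteq> b}"
proof (induction ts arbitrary: i)
  case (Cons t ts)
  have "{j. Suc j \<in> {j. i + j \<noteq> a \<and> i + j \<noteq> b}} = {j. i + 1 + j \<noteq> a \<and> i + 1 + j \<noteq> b}"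
    by auto
  then show ?case by (simp add: nths_Cons Cons.IH)
qed simp

lemma mset_remove_two:
  assumes "distinct ts" "a \<noteq> b" "a < length ts" "b < length ts"
  shows "mset ts = add_mset (ts ! a) (add_mset (ts ! b) (mset (remove_two 0 a b ts)))"
proof -
  let ?R = "remove_two 0 a b ts"
  have R: "?R = nths ts {j. j \<noteq> a \<and> j \<noteq> b}" by (simp add: remove_two_eq_nths)
  have set_R: "set ?R = set ts - {ts ! a, ts ! b}"
    unfolding R set_nths using assms by (auto simp: nth_eq_iff_index_eq in_set_conv_nth)
  have "ts ! a \<noteq> ts ! b" using assms(2) nth_eq_iff_index_eq[OF assms(1,3,4)] by blast
  moreover have "distinct ?R" unfolding R using assms(1) by simp
  ultimately have distinct: "distinct (ts ! a # ts ! b # ?R)"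
    unfolding distinct.simps list.set set_R by blast
  have "set (ts ! a # ts ! b # ?R) = set ts"
    unfolding list.set set_R using nth_mem[OF assms(3)] nth_mem[OF assms(4)] by blast
  then have "mset (ts ! a # ts ! b # ?R) = mset ts"
    using set_eq_iff_mset_eq_distinct[OF distinct assms(1)] by blast
  then show ?thesis by simp
qed

lemma forest_on_replace_two:
  assumes "forest_on S ts" "mset ts = add_mset t1 (add_mset t2 (mset rest))"
    and "mset (leaves_list t) = mset (leaves_list t1) + mset (leaves_list t2)"
  shows "forest_on S (t # rest)"
proof -
  have mset_leaves: "mset (concat (map leaves_list xs)) = (\<Sum>x\<in>#mset xs. mset (leaves_list x))"
    for xs :: "'a ptree list"
    by (induction xs) simp_all
  have "mset (concat (map leaves_list (t # rest))) = mset (concat (map leaves_list ts))"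
    unfolding mset_leaves using assms(2,3) by (simp add: add_ac)
  with assms(1) show ?thesis
    unfolding forest_on_def by (metis mset_eq_imp_distinct_iff mset_eq_setD)
qed

lemma forest_on_nonempty: "forest_on S ts \<Longrightarrow> S \<noteq> {} \<Longrightarrow> ts \<noteq> []"
  by (auto simp: forest_on_def)

section \<open>Correctness\<close>

lemma bpmtr_step_merge_impl:
  assumes forest: "forest_on S ts" and triplets: "triplet_set_on S (set rs)" and "distinct rs"
    and select: "scan_a es (index_triples (leaves_lists ts) rs) (down (length ts)) (down (length ts)) None
        = Some (a, b, s)"
  defines "ts' \<equiv> merge_impl rs (ts ! a) (ts ! b) # remove_two 0 a b ts"
  shows "bpmtr_step es (set rs) (set ts) (set ts') \<and> forest_on S ts' \<and> length ts' = length ts - 1"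
proof -
  let ?score = "pair_score es (index_triples (leaves_lists ts) rs)"
  let ?rest = "remove_two 0 a b ts"
  have ab: "a \<noteq> b" "a < length ts" "b < length ts"
    and best: "\<And>a' b'. a' < length ts \<Longrightarrow> b' < length ts \<Longrightarrow> a' \<noteq> b' \<Longrightarrow> ?score a' b' \<le> ?score a b"
    using scan_a_down_Some[OF select] by blast+
  have distinct: "distinct ts" using forest by (rule forest_on_distinct)
  have mset_ts: "mset ts = add_mset (ts ! a) (add_mset (ts ! b) (mset ?rest))"
    using mset_remove_two[OF distinct ab] .
  then have "mset ts = mset (ts ! a # ts ! b # ?rest)" by simp
  then have "distinct (ts ! a # ts ! b # ?rest)" "set ts = set (ts ! a # ts ! b # ?rest)"
    using distinct mset_eq_imp_distinct_iff mset_eq_setD by blast+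
  then have set_ts': "set ts' = insert (merge_impl rs (ts ! a) (ts ! b)) (set ts - {ts ! a, ts ! b})"
    unfolding ts'_def by auto
  have "e_score es (set rs) A B \<le> e_score es (set rs) (ts ! a) (ts ! b)"
    if A: "A \<in> set ts" and B: "B \<in> set ts" and "A \<noteq> B" for A B
  proof -
    obtain a' where a': "a' < length ts" "A = ts ! a'" using A by (auto simp: in_set_conv_nth)
    obtain b' where b': "b' < length ts" "B = ts ! b'" using B by (auto simp: in_set_conv_nth)
    have "a' \<noteq> b'" using a' b' \<open>A \<noteq> B\<close> by blast
    with a' b' best[of a' b'] show ?thesis
      using pair_score_eq_e_score[OF forest triplets \<open>distinct rs\<close>] ab(2,3) by simp
  qed
  moreover have "ts ! a \<noteq> ts ! b" using nth_eq_iff_index_eq[OF distinct ab(2,3)] ab(1) by blast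
  ultimately have "bpmtr_step es (set rs) (set ts) (set ts')"
    unfolding bpmtr_step_def using ab set_ts' merge_outcome_merge_impl[OF \<open>distinct rs\<close>]
    by (intro exI[of _ "ts ! a"] exI[of _ "ts ! b"] exI[of _ "merge_impl rs (ts ! a) (ts ! b)"])
      (simp del: merge_impl.simps)
  moreover have "forest_on S ts'"
    unfolding ts'_def
    by (rule forest_on_replace_two[OF forest mset_ts mset_leaves_list_merge_impl[OF \<open>distinct rs\<close>]])
  moreover have "length ts' = length ts - 1"
    using arg_cong[OF mset_ts, of size] by (simp add: ts'_def)
  ultimately show ?thesis by blast
qed

lemma bpmtr_loop_correct:
  assumes "forest_on S ts" "S \<noteq> {}" "length ts \<le> Suc f" "triplet_set_on S (set rs)" "distinct rs"
  shows "(bpmtr_step es (set rs))\<^sup>*\<^sup>* (set ts) {bpmtr_loop f es rs ts}"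
  using assms(1,3)
proof (induction f arbitrary: ts)
  have single: "set ts = {pick ts}" if "forest_on S ts" "length ts \<le> 1" for ts :: "'a ptree list"
    using forest_on_nonempty[OF that(1) assms(2)] that(2) by (cases ts) auto
  {
    case 0
    then show ?case using single by simp
  next
    case (Suc f)
    show ?case
    proof (cases "scan_a es (index_triples (leaves_lists ts) rs) (down (length ts)) (down (length ts)) None")
      case None
      then show ?thesis using scan_a_down_None single Suc.prems by fastforce
    next
      case (Some c)
      obtain a b s where c: "c = (a, b, s)" by (cases c)
      define ts' where "ts' = merge_impl rs (ts ! a) (ts ! b) # remove_two 0 a b ts"
      have step: "bpmtr_step es (set rs) (set ts) (set ts')" "forest_on S ts'" "length ts' = length ts - 1"
        using bpmtr_step_merge_impl[OF Suc.prems(1) assms(4,5) Some[unfolded c]] unfolding ts'_def by blast+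
      have "(bpmtr_step es (set rs))\<^sup>*\<^sup>* (set ts') {bpmtr_loop f es rs ts'}"
        using step(2,3) Suc.prems(2) by (intro Suc.IH) auto
      moreover have "bpmtr_loop (Suc f) es rs ts = bpmtr_loop f es rs ts'"
        using Some by (simp add: c ts'_def del: merge_impl.simps)
      ultimately show ?thesis using step(1) by (simp add: converse_rtranclp_into_rtranclp)
    qed
  }
qed

lemma leaf_trees_eq_map: "leaf_trees ss = map Leaf ss"
  by (induction ss) simp_all

lemma forest_on_leaf_trees: "distinct ss \<Longrightarrow> forest_on (set ss) (leaf_trees ss)"
  by (simp add: forest_on_def leaf_trees_eq_map comp_def)

lemma bpmtr_impl_correct:
  assumes "distinct ss" "distinct rs" "triplet_set_on (set ss) (set rs)" "ss \<noteq> []"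
  shows "bpmtr_output es (set rs) (set ss) (bpmtr_impl es rs ss)"
proof -
  have "(bpmtr_step es (set rs))\<^sup>*\<^sup>* (set (leaf_trees ss)) {bpmtr_loop (length ss) es rs (leaf_trees ss)}"
    using assms by (intro bpmtr_loop_correct[OF forest_on_leaf_trees]) (simp_all add: leaf_trees_eq_map)
  then show ?thesis by (simp add: bpmtr_output_def leaf_trees_eq_map del: bpmtr_loop.simps)
qed

section \<open>Running time\<close>

fun num_nodes :: "'a ptree \<Rightarrow> nat" where
  "num_nodes (Leaf a) = 1"
| "num_nodes (Node l r) = num_nodes l + num_nodes r + 1"

lemma num_nodes_pos: "Suc 0 \<le> num_nodes t"
  by (induction t) simp_all

lemma num_nodes_leaves_list: "num_nodes t + 1 = 2 * length (leaves_list t)"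
  by (induction t) simp_all

lemma length_positions: "length (positions t) = num_nodes t"
  by (induction t) (simp_all add: cons_all_eq_map)

lemma num_nodes_subtree_at: "num_nodes (subtree_at t p) \<le> num_nodes t"
  by (induction t p rule: subtree_at.induct) fastforce+

lemma num_nodes_replace_at: "num_nodes (replace_at t p s) \<le> num_nodes t + num_nodes s"
  by (induction t p s rule: replace_at.induct) fastforce+

lemma length_leaf_path_less: "leaf_path t x = Some p \<Longrightarrow> length p < num_nodes t"
  by (induction t arbitrary: p) (fastforce split: if_splits option.splits)+

lemma T_leaf_path_le: "T_leaf_path t x \<le> num_nodes t"
  by (induction t) (simp_all split: option.splits)

lemma T_lcp_len_le: "T_lcp_len xs ys \<le> length xs + 1"
  by (induction xs ys rule: T_lcp_len.induct) simp_all

lemma T_consistent_impl_le: "T_consistent_impl t r \<le> 5 * num_nodes t + 1"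
proof -
  obtain x y z where r: "r = (x, y, z)" by (cases r)
  note leaf_paths = T_leaf_path_le[of t x] T_leaf_path_le[of t y] T_leaf_path_le[of t z]
  show ?thesis
  proof (cases "leaf_path t x")
    case (Some px)
    have lcp: "T_lcp_len px q \<le> num_nodes t" for q
      using T_lcp_len_le[of px q] length_leaf_path_less[OF Some] by linarith
    show ?thesis
    proof (cases "leaf_path t y")
      case (Some py)
      note paths = \<open>leaf_path t x = Some px\<close> this
      show ?thesis
      proof (cases "leaf_path t z")
        case (Some pz)
        with paths leaf_paths lcp[of py] lcp[of pz] show ?thesis by (simp add: r)
      qed (use paths leaf_paths in \<open>simp add: r\<close>)
    qed (use Some leaf_paths in \<open>simp add: r\<close>)
  qed (use leaf_paths in \<open>simp add: r\<close>)
qed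

lemma T_count_cons_le: "T_count_cons t rs \<le> length rs * (5 * num_nodes t + 2) + 1"
proof (induction rs)
  case (Cons r rs)
  then show ?case using T_consistent_impl_le[of t r] by simp
qed simp

lemma T_cons_all_eq: "T_cons_all b ps = length ps + 1"
  by (induction ps) simp_all

lemma T_positions_le: "T_positions t \<le> 2 * num_nodes t ^ 2"
proof (induction t)
  case (Node l r)
  have "1 \<le> num_nodes l * num_nodes r" using num_nodes_pos[of l] num_nodes_pos[of r] by simp
  with Node.IH show ?case
    by (simp add: T_cons_all_eq T_append length_positions cons_all_eq_map power2_eq_square algebra_simps)
qed simp

lemma T_subtree_at_le: "T_subtree_at t p \<le> num_nodes t"
  by (induction t p rule: T_subtree_at.induct) (use num_nodes_pos in \<open>fastforce+\<close>)

lemma T_replace_at_le: "T_replace_at t p s \<le> num_nodes t"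
  by (induction t p s rule: T_replace_at.induct) (use num_nodes_pos in \<open>fastforce+\<close>)

lemma T_leaves_list_le: "T_leaves_list t \<le> 2 * num_nodes t ^ 2"
proof (induction t)
  case (Node l r)
  have "length (leaves_list l) \<le> num_nodes l" using num_nodes_leaves_list[of l] by linarith
  moreover have "1 \<le> num_nodes l * num_nodes r" using num_nodes_pos[of l] num_nodes_pos[of r] by simp
  ultimately show ?case using Node.IH by (simp add: T_append power2_eq_square algebra_simps)
qed simp

lemma T_mem_eq: "T_mem x xs = length xs + 1"
  by (induction xs) simp_all

lemma T_find_idx_le: "T_find_idx x ls i \<le> sum_list (map length ls) + 2 * length ls + 1"
  by (induction x ls i rule: T_find_idx.induct) (simp_all add: T_mem_eq)

lemma T_index_triples_le:
  "T_index_triples ls rs \<le> length rs * (3 * (sum_list (map length ls) + 2 * length ls + 1) + 1) + 1"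
proof (induction ls rs rule: T_index_triples.induct)
  case (2 ls x y z rs)
  then show ?case using T_find_idx_le[of x ls 0] T_find_idx_le[of y ls 0] T_find_idx_le[of z ls 0] by simp
qed simp

lemma length_index_triples: "length (index_triples ls rs) = length rs"
  by (induction ls rs rule: index_triples.induct) simp_all

lemma T_count_wpt_eq: "T_count_wpt a b xs = length xs + 1"
  by (induction xs) simp_all

lemma T_scan_b_le: "T_scan_b es ixs a bs best \<le> length bs * (length ixs + 5) + 1"
proof (induction bs arbitrary: best)
  case (Cons b bs)
  have "T_consider_pair es ixs a b best \<le> length ixs + 4"
    by (cases "count_wpt a b ixs") (simp add: T_count_wpt_eq)
  with Cons.IH[of "consider_pair es ixs a b best"] show ?case
    by (simp del: T_consider_pair.simps consider_pair.simps)
qed simp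

lemma T_scan_a_le: "T_scan_a es ixs as bs best \<le> length as * (length bs * (length ixs + 5) + 2) + 1"
proof (induction as arbitrary: best)
  case (Cons a as)
  show ?case
    using T_scan_b_le[of es ixs a bs best] Cons.IH[of "scan_b es ixs a bs best"]
    by (simp del: scan_b.simps T_scan_b.simps)
qed simp

lemma T_down_eq: "T_down k = k + 1"
  by (induction k) simp_all

lemma T_remove_two_eq: "T_remove_two i a b ts = length ts + 1"
  by (induction i a b ts rule: T_remove_two.induct) simp_all

lemma T_scan_x_le:
  "(\<And>p. T_swap_x tx ty p + T_count_cons (swap_x tx ty p) rs + 1 \<le> X) \<Longrightarrow>
     T_scan_x rs tx ty ps best c \<le> length ps * X + 1"
proof (induction ps arbitrary: best c)
  case (Cons p ps)
  have rest: "T_scan_x rs tx ty ps b' c' \<le> length ps * X + 1" for b' c'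
    using Cons by blast
  show ?case
    using Cons.prems[of p] rest[of "swap_x tx ty p" "count_cons (swap_x tx ty p) rs"] rest[of best c]
    by (simp del: swap_x.simps T_swap_x.simps)
qed simp

lemma T_scan_y_le:
  "(\<And>q. T_swap_y tx ty q + T_count_cons (swap_y tx ty q) rs + 1 \<le> X) \<Longrightarrow>
     T_scan_y rs tx ty qs best c \<le> length qs * X + 1"
proof (induction qs arbitrary: best c)
  case (Cons q qs)
  have rest: "T_scan_y rs tx ty qs b' c' \<le> length qs * X + 1" for b' c'
    using Cons by blast
  show ?case
    using Cons.prems[of q] rest[of "swap_y tx ty q" "count_cons (swap_y tx ty q) rs"] rest[of best c]
    by (simp del: swap_y.simps T_swap_y.simps)
qed simp

lemma T_merge_impl_le:
  assumes "num_nodes tx \<le> B" "num_nodes ty \<le> B"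
  shows "T_merge_impl rs tx ty
    \<le> 4 * B^2 + length rs * (10 * B + 7) + 2 * B * (2 * B + 3 + length rs * (15 * B + 7)) + 4"
proof -
  let ?m = "length rs"
  define X where "X = 2 * B + 3 + ?m * (15 * B + 7)"
  have count_cons: "T_count_cons t rs \<le> ?m * (5 * N + 2) + 1" if "num_nodes t \<le> N" for t N
    using T_count_cons_le[of t rs] that by (meson add_le_mono1 le_trans mult_le_mono2)
  have positions: "T_positions t \<le> 2 * B^2" if "num_nodes t \<le> B" for t
    using T_positions_le[of t] that by (meson le_trans mult_le_mono2 power_mono zero_le)
  have "T_swap_x tx ty p + T_count_cons (swap_x tx ty p) rs + 1 \<le> X" for p
  proof -
    have "num_nodes (swap_x tx ty p) \<le> 3 * B + 1"
      using num_nodes_replace_at[of tx p ty] num_nodes_subtree_at[of tx p] assms by simp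
    from count_cons[OF this] show ?thesis
      using T_replace_at_le[of tx p ty] T_subtree_at_le[of tx p] assms
      unfolding X_def by (simp add: algebra_simps)
  qed
  then have scan_x: "T_scan_x rs tx ty (positions tx) b c \<le> B * X + 1" for b c
    using T_scan_x_le[of tx ty rs X "positions tx" b c] assms(1)
    by (metis add_le_mono1 length_positions mult_le_mono1 order_trans)
  have "T_swap_y tx ty q + T_count_cons (swap_y tx ty q) rs + 1 \<le> X" for q
  proof -
    have "num_nodes (swap_y tx ty q) \<le> 3 * B + 1"
      using num_nodes_replace_at[of ty q tx] num_nodes_subtree_at[of ty q] assms by simp
    from count_cons[OF this] show ?thesis
      using T_replace_at_le[of ty q tx] T_subtree_at_le[of ty q] assms
      unfolding X_def by (simp add: algebra_simps)
  qed
  then have scan_y: "T_scan_y rs tx ty (positions ty) b c \<le> B * X + 1" for b c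
    using T_scan_y_le[of tx ty rs X "positions ty" b c] assms(2)
    by (metis add_le_mono1 length_positions mult_le_mono1 order_trans)
  have "T_count_cons (Node tx ty) rs \<le> ?m * (10 * B + 7) + 1"
    using count_cons[of "Node tx ty" "2 * B + 1"] assms by (simp add: algebra_simps)
  moreover obtain b1 c1
    where bc: "scan_x rs tx ty (positions tx) (Node tx ty) (count_cons (Node tx ty) rs) = (b1, c1)"
    by (cases "scan_x rs tx ty (positions tx) (Node tx ty) (count_cons (Node tx ty) rs)")
  moreover have "T_merge_impl rs tx ty = T_positions tx + T_count_cons (Node tx ty) rs
      + T_scan_x rs tx ty (positions tx) (Node tx ty) (count_cons (Node tx ty) rs)
      + T_positions ty + T_scan_y rs tx ty (positions ty) b1 c1 + 1"
    by (simp add: bc)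
  ultimately show ?thesis
    using positions[OF assms(1)] positions[OF assms(2)] scan_x[of "Node tx ty" "count_cons (Node tx ty) rs"]
      scan_y[of b1 c1]
    unfolding X_def by (simp add: algebra_simps)
qed

lemma forest_on_sum_length: "forest_on S ts \<Longrightarrow> sum_list (map (\<lambda>t. length (leaves_list t)) ts) = card S"
proof -
  assume "forest_on S ts"
  then have "card S = length (concat (map leaves_list ts))"
    unfolding forest_on_def using distinct_card by metis
  then show ?thesis by (simp add: length_concat comp_def)
qed

lemma forest_on_sum_num_nodes: "forest_on S ts \<Longrightarrow> sum_list (map num_nodes ts) \<le> 2 * card S"
proof -
  assume "forest_on S ts"
  have "sum_list (map num_nodes ts) \<le> sum_list (map (\<lambda>t. 2 * length (leaves_list t)) ts)"
  proof (rule sum_list_mono)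
    show "num_nodes t \<le> 2 * length (leaves_list t)" for t using num_nodes_leaves_list[of t] by linarith
  qed
  also have "\<dots> = 2 * card S"
    using forest_on_sum_length[OF \<open>forest_on S ts\<close>] by (simp add: sum_list_const_mult)
  finally show ?thesis .
qed

lemma forest_on_num_nodes_le: "forest_on S ts \<Longrightarrow> t \<in> set ts \<Longrightarrow> num_nodes t \<le> 2 * card S"
  using member_le_sum_list[of "num_nodes t" "map num_nodes ts"] forest_on_sum_num_nodes[of S ts] by simp

lemma forest_on_length_le: "forest_on S ts \<Longrightarrow> length ts \<le> 2 * card S"
proof -
  assume "forest_on S ts"
  have "length ts = sum_list (map (\<lambda>t. 1) ts)" by (simp add: sum_list_triv)
  also have "\<dots> \<le> sum_list (map num_nodes ts)" by (rule sum_list_mono) (use num_nodes_pos in simp)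
  finally show ?thesis using forest_on_sum_num_nodes[OF \<open>forest_on S ts\<close>] by simp
qed

lemma T_leaves_lists_le:
  assumes "forest_on S ts"
  shows "T_leaves_lists ts \<le> 2 * (2 * card S)^2 + 2 * card S + 1"
proof -
  let ?B = "2 * card S"
  have "T_leaves_lists ts = sum_list (map T_leaves_list ts) + length ts + 1"
    by (induction ts) simp_all
  moreover have "sum_list (map T_leaves_list ts) \<le> sum_list (map (\<lambda>t. 2 * ?B * num_nodes t) ts)"
  proof (rule sum_list_mono)
    fix t assume "t \<in> set ts"
    then have "num_nodes t ^ 2 \<le> ?B * num_nodes t"
      using forest_on_num_nodes_le[OF assms] by (simp add: power2_eq_square)
    then show "T_leaves_list t \<le> 2 * ?B * num_nodes t" using T_leaves_list_le[of t] by simp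
  qed
  moreover have "sum_list (map (\<lambda>t. 2 * ?B * num_nodes t) ts) \<le> 2 * ?B * ?B"
    using forest_on_sum_num_nodes[OF assms] by (simp add: sum_list_const_mult)
  ultimately show ?thesis using forest_on_length_le[OF assms] by (simp add: power2_eq_square)
qed

lemma T_index_triples_leaves_lists_le:
  assumes "forest_on S ts"
  shows "T_index_triples (leaves_lists ts) rs \<le> length rs * (18 * card S + 4) + 1"
proof -
  have "3 * (sum_list (map length (leaves_lists ts)) + 2 * length (leaves_lists ts) + 1) + 1
      \<le> 18 * card S + 4"
    using forest_on_sum_length[OF assms] forest_on_length_le[OF assms]
    by (simp add: leaves_lists_eq_map comp_def)
  then show ?thesis
    using T_index_triples_le[of "leaves_lists ts" rs] by (meson add_le_mono1 le_trans mult_le_mono2)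
qed

lemma forest_on_card_pos: "forest_on S ts \<Longrightarrow> S \<noteq> {} \<Longrightarrow> 1 \<le> card S"
  unfolding forest_on_def by (metis List.finite_set card_gt_0_iff less_eq_Suc_le One_nat_def)

lemma round_cost_arith:
  fixes m B :: nat
  assumes "1 \<le> B"
  shows "(2 * B^2 + B + 1) + (m * (9 * B + 4) + 1) + (4 * B + 4) + (B * (B * (m + 5) + 2) + 1) + 2 * B
     + (4 * B^2 + m * (10 * B + 7) + 2 * B * (2 * B + 3 + m * (15 * B + 7)) + 4) + (B + 1) + 2
     \<le> 200 * (m + 1) * B^2"
proof -
  obtain b where "B = Suc b" using assms by (cases B) auto
  then show ?thesis by (simp add: algebra_simps power2_eq_square)
qed

lemma T_bpmtr_loop_le:
  assumes "forest_on S ts" "S \<noteq> {}" "triplet_set_on S (set rs)" "distinct rs"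
  shows "T_bpmtr_loop f es rs ts \<le> (f + 1) * (200 * (length rs + 1) * (2 * card S)^2)"
proof -
  define B where "B = 2 * card S"  \<comment> \<open>bounds the number of trees and the size of each tree\<close>
  define P where "P = 200 * (length rs + 1) * B^2"
  let ?m = "length rs"
  have B: "1 \<le> B" using forest_on_card_pos[OF assms(1,2)] by (simp add: B_def)
  note arith = round_cost_arith[OF B, of ?m, folded P_def]
  have "T_bpmtr_loop f es rs ts \<le> (f + 1) * P"
    using assms(1)
  proof (induction f arbitrary: ts)
    case 0
    then show ?case using arith by simp
  next
    case (Suc f)
    let ?ixs = "index_triples (leaves_lists ts) rs" and ?k = "length ts"
    have k: "?k \<le> B" using forest_on_length_le[OF Suc.prems] by (simp add: B_def)
    define round where "round = T_leaves_lists ts + T_index_triples (leaves_lists ts) rs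
      + 2 * (T_length ts + T_down ?k) + T_scan_a es ?ixs (down ?k) (down ?k) None"
    have "T_scan_a es ?ixs (down ?k) (down ?k) None \<le> ?k * (?k * (?m + 5) + 2) + 1"
      using T_scan_a_le[of es ?ixs "down ?k" "down ?k" None] by (simp add: length_down length_index_triples)
    also have "\<dots> \<le> B * (B * (?m + 5) + 2) + 1"
      using k by (intro add_le_mono1 mult_le_mono add_le_mono1 mult_le_mono1) simp_all
    finally have "T_scan_a es ?ixs (down ?k) (down ?k) None \<le> B * (B * (?m + 5) + 2) + 1" .
    moreover have "T_leaves_lists ts \<le> 2 * B^2 + B + 1"
      using T_leaves_lists_le[OF Suc.prems] by (simp add: B_def)
    moreover have "T_index_triples (leaves_lists ts) rs \<le> ?m * (9 * B + 4) + 1"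
      using T_index_triples_leaves_lists_le[OF Suc.prems, of rs] by (simp add: B_def)
    moreover have "2 * (T_length ts + T_down ?k) \<le> 4 * B + 4"
      using k by (simp add: T_length T_down_eq)
    ultimately have round: "round \<le> (2 * B^2 + B + 1) + (?m * (9 * B + 4) + 1) + (4 * B + 4)
        + (B * (B * (?m + 5) + 2) + 1)"
      unfolding round_def by linarith
    have unfold: "T_bpmtr_loop (Suc f) es rs ts = round + (case scan_a es ?ixs (down ?k) (down ?k) None of
        None \<Rightarrow> T_pick ts
      | Some (a, b, s) \<Rightarrow> T_nth ts a + T_nth ts b + T_merge_impl rs (ts ! a) (ts ! b) + T_remove_two 0 a b ts
          + T_bpmtr_loop f es rs (merge_impl rs (ts ! a) (ts ! b) # remove_two 0 a b ts)) + 1"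
      unfolding round_def T_bpmtr_loop.simps(2) by (simp only: add.assoc)
    have P: "(Suc f + 1) * P = P + (f + 1) * P" by simp
    show ?case
    proof (cases "scan_a es ?ixs (down ?k) (down ?k) None")
      case None
      then show ?thesis unfolding unfold P using round arith by simp
    next
      case (Some c)
      obtain a b s where c: "c = (a, b, s)" by (cases c)
      have ab: "a < ?k" "b < ?k" using scan_a_down_Some[OF Some[unfolded c]] by blast+
      define ts' where "ts' = merge_impl rs (ts ! a) (ts ! b) # remove_two 0 a b ts"
      have "forest_on S ts'"
        using bpmtr_step_merge_impl[OF Suc.prems assms(3,4) Some[unfolded c]] unfolding ts'_def by blast
      then have IH: "T_bpmtr_loop f es rs ts' \<le> (f + 1) * P" by (rule Suc.IH)
      have merge: "T_merge_impl rs (ts ! a) (ts ! b)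
          \<le> 4 * B^2 + ?m * (10 * B + 7) + 2 * B * (2 * B + 3 + ?m * (15 * B + 7)) + 4"
        using forest_on_num_nodes_le[OF Suc.prems] ab unfolding B_def by (intro T_merge_impl_le) simp_all
      have nth: "T_nth ts a + T_nth ts b \<le> 2 * B" and remove: "T_remove_two 0 a b ts \<le> B + 1"
        using ab k by (simp_all add: T_nth T_remove_two_eq)
      have "T_bpmtr_loop (Suc f) es rs ts = round + (T_nth ts a + T_nth ts b)
          + T_merge_impl rs (ts ! a) (ts ! b) + T_remove_two 0 a b ts + T_bpmtr_loop f es rs ts' + 1"
        unfolding unfold Some c ts'_def by simp
      then show ?thesis unfolding P using round merge nth remove IH arith by linarith
    qed
  qed
  then show ?thesis unfolding P_def B_def .
qed

lemma T_leaf_trees_eq: "T_leaf_trees xs = length xs + 1"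
  by (induction xs) simp_all

lemma final_cost_arith:
  fixes m n :: nat
  assumes "1 \<le> m" "1 \<le> n"
  shows "(n + 1) + (n + 1) + (n + 1) * (200 * (m + 1) * (2 * n)^2) + 1 \<le> 4000 * m * n ^ 3"
proof -
  obtain m' n' where "m = Suc m'" "n = Suc n'" using assms by (metis Suc_le_D One_nat_def)
  then show ?thesis by (simp add: algebra_simps power2_eq_square power3_eq_cube)
qed

theorem theorem2:
  "\<exists>c :: nat. \<forall>(es :: escore_fun) (S :: 'a set) (R :: ('a \<times> 'a \<times> 'a) set) ss rs.
     set ss = S \<and> distinct ss \<and> set rs = R \<and> distinct rs \<and>
     triplet_set_on S R \<and> R \<noteq> {} \<longrightarrow>
       bpmtr_output es R S (bpmtr_impl es rs ss) \<and>
       T_bpmtr_impl es rs ss \<le> c * card R * card S ^ 3"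
proof (intro exI allI impI)
  fix es :: escore_fun and S :: "'a set" and R :: "('a \<times> 'a \<times> 'a) set" and ss rs
  assume "set ss = S \<and> distinct ss \<and> set rs = R \<and> distinct rs \<and> triplet_set_on S R \<and> R \<noteq> {}"
  then have S: "S = set ss" "distinct ss" and R: "R = set rs" "distinct rs" "rs \<noteq> []"
    and triplets: "triplet_set_on (set ss) (set rs)" by auto
  then obtain x y z where "(x, y, z) \<in> set rs" by (metis list.set_sel(1) prod_cases3)
  with triplets have "ss \<noteq> []" using triplet_set_onD by fastforce
  have "T_bpmtr_loop (length ss) es rs (leaf_trees ss)
      \<le> (length ss + 1) * (200 * (length rs + 1) * (2 * length ss)^2)"
    using T_bpmtr_loop_le[OF forest_on_leaf_trees[OF S(2)] _ triplets R(2)] \<open>ss \<noteq> []\<close> S(2)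
    by (simp add: distinct_card)
  moreover have "1 \<le> length rs" "1 \<le> length ss" using R(3) \<open>ss \<noteq> []\<close> by (auto simp: Suc_le_eq)
  ultimately have "T_bpmtr_impl es rs ss \<le> 4000 * length rs * length ss ^ 3"
    using final_cost_arith[of "length rs" "length ss"] by (simp add: T_length T_leaf_trees_eq)
  then show "bpmtr_output es R S (bpmtr_impl es rs ss) \<and> T_bpmtr_impl es rs ss \<le> 4000 * card R * card S ^ 3"
    using bpmtr_impl_correct[OF S(2) R(2) triplets \<open>ss \<noteq> []\<close>] S R by (simp add: distinct_card)
qed

end
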